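(* Let $d\ge 8$ be an even integer and let $B$ be a bubble gadget that is properly attached to $S$ in a graph $G$. Then no two distinct vertices of $B$ are $d$-twins in the induced subgraph $G[V(B)\cup S]$.
   Context: Two distinct vertices $u,v$ of a graph $H$ are $d$-twins in $H$ if $|(N_H(u)\setminus N_H[v])\cup(N_H(v)\setminus N_H[u])|\le d$ (open/closed neighborhoods). The $a\times b$ rook graph has vertex set $\{(i,j): i\in[a], j\in[b]\}$, two distinct vertices being adjacent iff they agree in the first or in the second coordinate; view it as a grid with rows and columns. A bubble gadget $B$ (for $d$) is the $w\times w$ rook graph with $w=d/2+2$, minus the two rightmost vertices of its top row (so the top row has $d/2$ vertices and the rightmost column has $d/2+1$ vertices). If $B$ is an induced subgraph of a graph $G$ and $S$ is the set of vertices of $V(G)\setminus V(B)$ having a neighbor in $V(B)$, then $B$ is properly attached to $S$ in $G$ if every vertex of the top row and every vertex of the rightmost column of $B$ has one or two neighbors in $V(G)\setminus V(B)$, while every other vertex of $B$ has no neighbor outside $V(B)$. *)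

theory Defs
  imports Main
begin

definition simple_graph :: "'a set \<Rightarrow> ('a \<Rightarrow> 'a \<Rightarrow> bool) \<Rightarrow> bool" where
  "simple_graph V E \<longleftrightarrow> finite V \<and> (\<forall>u v. E u v \<longrightarrow> u \<in> V \<and> v \<in> V)
     \<and> (\<forall>u v. E u v \<longrightarrow> E v u) \<and> (\<forall>u. \<not> E u u)"

definition open_nbhd :: "'a set \<Rightarrow> ('a \<Rightarrow> 'a \<Rightarrow> bool) \<Rightarrow> 'a \<Rightarrow> 'a set" where
  "open_nbhd W E u = {x \<in> W. E u x}"

definition closed_nbhd :: "'a set \<Rightarrow> ('a \<Rightarrow> 'a \<Rightarrow> bool) \<Rightarrow> 'a \<Rightarrow> 'a set" where
  "closed_nbhd W E u = insert u (open_nbhd W E u)"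

definition d_twins :: "'a set \<Rightarrow> ('a \<Rightarrow> 'a \<Rightarrow> bool) \<Rightarrow> nat \<Rightarrow> 'a \<Rightarrow> 'a \<Rightarrow> bool" where
  "d_twins W E d u v \<longleftrightarrow> u \<in> W \<and> v \<in> W \<and> u \<noteq> v \<and>
     card ((open_nbhd W E u - closed_nbhd W E v) \<union> (open_nbhd W E v - closed_nbhd W E u)) \<le> d"

definition rook_adj :: "nat \<times> nat \<Rightarrow> nat \<times> nat \<Rightarrow> bool" where
  "rook_adj p q \<longleftrightarrow> p \<noteq> q \<and> (fst p = fst q \<or> snd p = snd q)"

text \<open>Width w = d/2 + 2 of the bubble gadget. Rows and columns are indexed by
  1..w; row 1 is the top row, column w the rightmost column.\<close>
definition bubble_width :: "nat \<Rightarrow> nat" where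
  "bubble_width d = d div 2 + 2"

definition bubble_verts :: "nat \<Rightarrow> (nat \<times> nat) set" where
  "bubble_verts d = {(i, j). 1 \<le> i \<and> i \<le> bubble_width d \<and> 1 \<le> j \<and> j \<le> bubble_width d
      \<and> \<not> (i = 1 \<and> j \<ge> bubble_width d - 1)}"

definition bubble_boundary :: "nat \<Rightarrow> (nat \<times> nat) set" where
  "bubble_boundary d = {p \<in> bubble_verts d. fst p = 1 \<or> snd p = bubble_width d}"

text \<open>f embeds the bubble gadget as an induced subgraph of G = (V, E);
  V(B) = f ` bubble_verts d.\<close>
definition induced_bubble :: "'a set \<Rightarrow> ('a \<Rightarrow> 'a \<Rightarrow> bool) \<Rightarrow> nat \<Rightarrow> (nat \<times> nat \<Rightarrow> 'a) \<Rightarrow> bool" where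
  "induced_bubble V E d f \<longleftrightarrow> inj_on f (bubble_verts d) \<and> f ` bubble_verts d \<subseteq> V \<and>
     (\<forall>p \<in> bubble_verts d. \<forall>q \<in> bubble_verts d. E (f p) (f q) \<longleftrightarrow> rook_adj p q)"

definition attach_set :: "'a set \<Rightarrow> ('a \<Rightarrow> 'a \<Rightarrow> bool) \<Rightarrow> 'a set \<Rightarrow> 'a set" where
  "attach_set V E VB = {x \<in> V - VB. \<exists>u \<in> VB. E x u}"

definition properly_attached :: "'a set \<Rightarrow> ('a \<Rightarrow> 'a \<Rightarrow> bool) \<Rightarrow> nat \<Rightarrow> (nat \<times> nat \<Rightarrow> 'a) \<Rightarrow> 'a set \<Rightarrow> bool" where
  "properly_attached V E d f S \<longleftrightarrow>
     induced_bubble V E d f \<and> S = attach_set V E (f ` bubble_verts d) \<and>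
     (\<forall>p \<in> bubble_verts d.
        let k = card {x \<in> V - f ` bubble_verts d. E (f p) x} in
        (if p \<in> bubble_boundary d then 1 \<le> k \<and> k \<le> 2 else k = 0))"

end

theory Submission
  imports Defs
begin

text \<open>Let \<open>m = d/2\<close>. Two distinct gadget vertices already disagree on many gadget
  vertices: if they lie in different rows and columns, the four lines through them minus
  the corners give at least \<open>4m - 6 > 2m\<close> such vertices (here \<open>d \<ge> 8\<close> is used); if they
  share a line, the two lines through them perpendicular to it give at least
  \<open>2m + 1\<close>, except in two configurations that give only \<open>2m\<close>. In those
  configurations exactly one of the two vertices lies on the boundary, and its neighbour
  outside the gadget, which the interior vertex does not see, is the
  missing vertex of the symmetric difference.\<close>

definition nbhd_sym_diff :: "'a set \<Rightarrow> ('a \<Rightarrow> 'a \<Rightarrow> bool) \<Rightarrow> 'a \<Rightarrow> 'a \<Rightarrow> 'a set" where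
  "nbhd_sym_diff W E u v =
     (open_nbhd W E u - closed_nbhd W E v) \<union> (open_nbhd W E v - closed_nbhd W E u)"

lemma mem_nbhd_sym_diff:
  "x \<in> nbhd_sym_diff W E u v \<longleftrightarrow>
     x \<in> W \<and> (E u x \<and> \<not> E v x \<and> x \<noteq> v \<or> E v x \<and> \<not> E u x \<and> x \<noteq> u)"
  unfolding nbhd_sym_diff_def open_nbhd_def closed_nbhd_def by auto

lemma nbhd_sym_diff_commute: "nbhd_sym_diff W E u v = nbhd_sym_diff W E v u"
  unfolding nbhd_sym_diff_def by blast

lemma finite_nbhd_sym_diff: "finite W \<Longrightarrow> finite (nbhd_sym_diff W E u v)"
  by (rule finite_subset[of _ W]) (auto simp: mem_nbhd_sym_diff)

lemma d_twins_iff_card_nbhd_sym_diff: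
  "d_twins W E d u v \<longleftrightarrow> u \<in> W \<and> v \<in> W \<and> u \<noteq> v \<and> card (nbhd_sym_diff W E u v) \<le> d"
  unfolding d_twins_def nbhd_sym_diff_def ..

lemma image_nbhd_sym_diff_subset:
  assumes "inj_on f A" "f ` A \<subseteq> W"
    and "\<And>a b. a \<in> A \<Longrightarrow> b \<in> A \<Longrightarrow> E (f a) (f b) \<longleftrightarrow> R a b"
    and "p \<in> A" "q \<in> A"
  shows "f ` nbhd_sym_diff A R p q \<subseteq> nbhd_sym_diff W E (f p) (f q)"
proof
  fix y assume "y \<in> f ` nbhd_sym_diff A R p q"
  then obtain r where r: "r \<in> nbhd_sym_diff A R p q" and y: "y = f r" by blast
  then have "r \<in> A" by (simp add: mem_nbhd_sym_diff)
  then have "f r = f p \<longleftrightarrow> r = p" "f r = f q \<longleftrightarrow> r = q"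
    using assms(1,4,5) by (auto dest: inj_onD)
  then show "y \<in> nbhd_sym_diff W E (f p) (f q)"
    using r \<open>r \<in> A\<close> assms(2-5) unfolding y mem_nbhd_sym_diff by auto
qed

lemma card_punctured_Un_le:
  assumes "finite N" "finite L" "finite L'" "L \<inter> L' = {}" "p \<in> L" "q \<in> L'"
    and "(L - {p}) \<union> (L' - {q}) \<subseteq> N"
  shows "card L - 1 + (card L' - 1) \<le> card N"
proof -
  have "(L - {p}) \<inter> (L' - {q}) = {}"
    using assms(4) by blast
  then have "card ((L - {p}) \<union> (L' - {q})) = card L - 1 + (card L' - 1)"
    using assms(2,3,5,6) by (simp add: card_Un_disjoint)
  then show ?thesis
    using card_mono[OF assms(1,7)] by simp
qed

lemma card_Diff_doubleton_ge: "card A - 2 \<le> card (A - {a, b})"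
proof -
  have "card A - card {a, b} \<le> card (A - {a, b})"
    by (rule diff_card_le_card_Diff) simp
  moreover have "card {a, b} \<le> 2"
    by (cases "a = b") simp_all
  ultimately show ?thesis by linarith
qed

definition bubble_row :: "nat \<Rightarrow> nat \<Rightarrow> (nat \<times> nat) set" where
  "bubble_row d i = {r \<in> bubble_verts d. fst r = i}"

definition bubble_col :: "nat \<Rightarrow> nat \<Rightarrow> (nat \<times> nat) set" where
  "bubble_col d j = {r \<in> bubble_verts d. snd r = j}"

lemma finite_bubble_verts: "finite (bubble_verts d)"
  by (rule finite_subset[of _ "{1..bubble_width d} \<times> {1..bubble_width d}"])
    (auto simp: bubble_verts_def)

lemma finite_bubble_row: "finite (bubble_row d i)"
  using finite_bubble_verts by (simp add: bubble_row_def)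

lemma finite_bubble_col: "finite (bubble_col d j)"
  using finite_bubble_verts by (simp add: bubble_col_def)

lemma card_bubble_row:
  assumes "1 \<le> i" "i \<le> bubble_width d"
  shows "card (bubble_row d i) = (if i = 1 then d div 2 else bubble_width d)"
proof -
  have "bubble_row d i = {i} \<times> {1..(if i = 1 then d div 2 else bubble_width d)}"
    using assms by (auto simp: bubble_row_def bubble_verts_def bubble_width_def)
  then show ?thesis by (simp add: card_cartesian_product)
qed

lemma card_bubble_col:
  assumes "1 \<le> j" "j \<le> bubble_width d"
  shows "card (bubble_col d j) = (if j + 2 \<le> bubble_width d then bubble_width d else bubble_width d - 1)"
proof -
  have "bubble_col d j = {(if j + 2 \<le> bubble_width d then 1 else 2)..bubble_width d} \<times> {j}"
    using assms by (auto simp: bubble_col_def bubble_verts_def)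
  then show ?thesis by (simp add: card_cartesian_product)
qed

lemma card_bubble_row_ge: "(i, j) \<in> bubble_verts d \<Longrightarrow> d div 2 \<le> card (bubble_row d i)"
  using card_bubble_row[of i d] by (auto simp: bubble_verts_def bubble_width_def)

lemma card_bubble_col_ge:
  "(i, j) \<in> bubble_verts d \<Longrightarrow> bubble_width d - 1 \<le> card (bubble_col d j)"
  using card_bubble_col[of j d] by (auto simp: bubble_verts_def)

lemma card_bubble_nbhd_sym_diff_same_row:
  assumes p: "(i, j) \<in> bubble_verts d" and q: "(i, j') \<in> bubble_verts d" and "j \<noteq> j'"
  shows "2 * (d div 2) < card (nbhd_sym_diff (bubble_verts d) rook_adj (i, j) (i, j')) \<or>
    2 * (d div 2) \<le> card (nbhd_sym_diff (bubble_verts d) rook_adj (i, j) (i, j')) \<and>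
    ((i, j) \<in> bubble_boundary d) \<noteq> ((i, j') \<in> bubble_boundary d)"
proof -
  let ?w = "bubble_width d"
  have N: "card (bubble_col d j) - 1 + (card (bubble_col d j') - 1)
      \<le> card (nbhd_sym_diff (bubble_verts d) rook_adj (i, j) (i, j'))"
    using p q \<open>j \<noteq> j'\<close>
    by (intro card_punctured_Un_le[where p = "(i, j)" and q = "(i, j')"]
        finite_nbhd_sym_diff finite_bubble_verts finite_bubble_col)
      (auto simp: mem_nbhd_sym_diff bubble_col_def rook_adj_def)
  have bounds: "1 \<le> j" "j \<le> ?w" "1 \<le> j'" "j' \<le> ?w"
    "\<not> (i = 1 \<and> ?w - 1 \<le> j)" "\<not> (i = 1 \<and> ?w - 1 \<le> j')"
    using p q by (auto simp: bubble_verts_def)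
  show ?thesis
  proof (cases "j + 2 \<le> ?w \<or> j' + 2 \<le> ?w")
    case True
    then show ?thesis
      using N bounds card_bubble_col[of j d] card_bubble_col[of j' d]
      by (simp add: bubble_width_def split: if_splits)
  next
    case False
    \<comment> \<open>then p and q are the two rightmost vertices of a row below the top one\<close>
    then have "((i, j) \<in> bubble_boundary d) \<noteq> ((i, j') \<in> bubble_boundary d)"
      using p q bounds \<open>j \<noteq> j'\<close> by (auto simp: bubble_boundary_def)
    then show ?thesis
      using False N bounds card_bubble_col[of j d] card_bubble_col[of j' d]
      by (auto simp: bubble_width_def)
  qed
qed

lemma card_bubble_nbhd_sym_diff_same_col:
  assumes p: "(i, j) \<in> bubble_verts d" and q: "(i', j) \<in> bubble_verts d" and "i \<noteq> i'"
  shows "2 * (d div 2) < card (nbhd_sym_diff (bubble_verts d) rook_adj (i, j) (i', j)) \<or>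
    2 * (d div 2) \<le> card (nbhd_sym_diff (bubble_verts d) rook_adj (i, j) (i', j)) \<and>
    ((i, j) \<in> bubble_boundary d) \<noteq> ((i', j) \<in> bubble_boundary d)"
proof -
  let ?w = "bubble_width d"
  have N: "card (bubble_row d i) - 1 + (card (bubble_row d i') - 1)
      \<le> card (nbhd_sym_diff (bubble_verts d) rook_adj (i, j) (i', j))"
    using p q \<open>i \<noteq> i'\<close>
    by (intro card_punctured_Un_le[where p = "(i, j)" and q = "(i', j)"]
        finite_nbhd_sym_diff finite_bubble_verts finite_bubble_row)
      (auto simp: mem_nbhd_sym_diff bubble_row_def rook_adj_def)
  have bounds: "1 \<le> i" "i \<le> ?w" "1 \<le> i'" "i' \<le> ?w"
    "\<not> (i = 1 \<and> ?w - 1 \<le> j)" "\<not> (i' = 1 \<and> ?w - 1 \<le> j)"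
    using p q by (auto simp: bubble_verts_def)
  show ?thesis
  proof (cases "i = 1 \<or> i' = 1")
    case True
    \<comment> \<open>the top row stops two columns short of the right border\<close>
    then have "((i, j) \<in> bubble_boundary d) \<noteq> ((i', j) \<in> bubble_boundary d)"
      using p q bounds \<open>i \<noteq> i'\<close> by (auto simp: bubble_boundary_def)
    then show ?thesis
      using True N bounds card_bubble_row[of i d] card_bubble_row[of i' d] \<open>i \<noteq> i'\<close>
      by (auto simp: bubble_width_def)
  next
    case False
    then show ?thesis
      using N bounds card_bubble_row[of i d] card_bubble_row[of i' d]
      by (simp add: bubble_width_def)
  qed
qed

lemma card_bubble_nbhd_sym_diff_diff_row_col:
  assumes p: "(i, j) \<in> bubble_verts d" and q: "(i', j') \<in> bubble_verts d"
    and "i \<noteq> i'" "j \<noteq> j'" and "8 \<le> d"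
  shows "2 * (d div 2) < card (nbhd_sym_diff (bubble_verts d) rook_adj (i, j) (i', j'))"
proof -
  let ?w = "bubble_width d"
  define R where "R = bubble_row d i - {(i, j), (i, j')}"
  define R' where "R' = bubble_row d i' - {(i', j), (i', j')}"
  define C where "C = bubble_col d j - {(i, j), (i', j)}"
  define C' where "C' = bubble_col d j' - {(i, j'), (i', j')}"
  have fin: "finite R" "finite R'" "finite C" "finite C'"
    by (simp_all add: R_def R'_def C_def C'_def finite_bubble_row finite_bubble_col)
  have "R \<union> R' \<union> C \<union> C' \<subseteq> nbhd_sym_diff (bubble_verts d) rook_adj (i, j) (i', j')"
    using \<open>i \<noteq> i'\<close> \<open>j \<noteq> j'\<close>
    by (auto simp: R_def R'_def C_def C'_def bubble_row_def bubble_col_def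
        mem_nbhd_sym_diff rook_adj_def)
  then have "card (R \<union> R' \<union> C \<union> C')
      \<le> card (nbhd_sym_diff (bubble_verts d) rook_adj (i, j) (i', j'))"
    by (intro card_mono finite_nbhd_sym_diff finite_bubble_verts)
  moreover have "R \<inter> R' = {}" "(R \<union> R') \<inter> C = {}" "(R \<union> R' \<union> C) \<inter> C' = {}"
    using \<open>i \<noteq> i'\<close> \<open>j \<noteq> j'\<close>
    by (auto simp: R_def R'_def C_def C'_def bubble_row_def bubble_col_def)
  then have "card (R \<union> R' \<union> C \<union> C') = card R + card R' + card C + card C'"
    using fin by (simp add: card_Un_disjoint)
  moreover have "d div 2 - 2 \<le> card R"
    using card_Diff_doubleton_ge[of "bubble_row d i" "(i, j)" "(i, j')"] card_bubble_row_ge[OF p]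
    unfolding R_def by linarith
  moreover have "d div 2 - 2 \<le> card R'"
    using card_Diff_doubleton_ge[of "bubble_row d i'" "(i', j)" "(i', j')"] card_bubble_row_ge[OF q]
    unfolding R'_def by linarith
  moreover have "bubble_width d - 3 \<le> card C"
    using card_Diff_doubleton_ge[of "bubble_col d j" "(i, j)" "(i', j)"] card_bubble_col_ge[OF p]
    unfolding C_def by linarith
  moreover have "bubble_width d - 3 \<le> card C'"
    using card_Diff_doubleton_ge[of "bubble_col d j'" "(i, j')" "(i', j')"] card_bubble_col_ge[OF q]
    unfolding C'_def by linarith
  ultimately show ?thesis
    using \<open>8 \<le> d\<close> by (simp add: bubble_width_def)
qed

lemma card_bubble_nbhd_sym_diff_lower:
  assumes "p \<in> bubble_verts d" "q \<in> bubble_verts d" "p \<noteq> q" "8 \<le> d"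
  shows "2 * (d div 2) < card (nbhd_sym_diff (bubble_verts d) rook_adj p q) \<or>
    2 * (d div 2) \<le> card (nbhd_sym_diff (bubble_verts d) rook_adj p q) \<and>
    (p \<in> bubble_boundary d) \<noteq> (q \<in> bubble_boundary d)"
proof -
  obtain i j i' j' where "p = (i, j)" "q = (i', j')"
    by fastforce
  then show ?thesis
    using assms card_bubble_nbhd_sym_diff_same_row[of i j d j']
      card_bubble_nbhd_sym_diff_same_col[of i j d i'] card_bubble_nbhd_sym_diff_diff_row_col[of i j d i' j']
    by (cases "i = i'"; cases "j = j'") auto
qed

lemma card_image_bubble_nbhd_sym_diff:
  assumes "induced_bubble V E d f"
  shows "card (f ` nbhd_sym_diff (bubble_verts d) rook_adj p q)
    = card (nbhd_sym_diff (bubble_verts d) rook_adj p q)"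
proof -
  have "inj_on f (bubble_verts d)"
    using assms by (simp add: induced_bubble_def)
  then have "inj_on f (nbhd_sym_diff (bubble_verts d) rook_adj p q)"
    by (rule inj_on_subset) (auto simp: mem_nbhd_sym_diff)
  then show ?thesis
    by (rule card_image)
qed

lemma card_bubble_nbhd_sym_diff_le_host:
  assumes "induced_bubble V E d f" "f ` bubble_verts d \<subseteq> W" "finite W"
    and "p \<in> bubble_verts d" "q \<in> bubble_verts d"
  shows "card (nbhd_sym_diff (bubble_verts d) rook_adj p q) \<le> card (nbhd_sym_diff W E (f p) (f q))"
proof -
  have "f ` nbhd_sym_diff (bubble_verts d) rook_adj p q \<subseteq> nbhd_sym_diff W E (f p) (f q)"
    using assms by (intro image_nbhd_sym_diff_subset) (auto simp: induced_bubble_def)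
  then have "card (f ` nbhd_sym_diff (bubble_verts d) rook_adj p q)
      \<le> card (nbhd_sym_diff W E (f p) (f q))"
    by (intro card_mono finite_nbhd_sym_diff assms(3))
  then show ?thesis
    using assms(1) by (simp add: card_image_bubble_nbhd_sym_diff)
qed

lemma properly_attached_private_nbr:
  assumes "simple_graph V E" "properly_attached V E d f S"
    and "p \<in> bubble_verts d" "p \<in> bubble_boundary d"
    and "q \<in> bubble_verts d" "q \<notin> bubble_boundary d"
  shows "\<exists>x \<in> S. E (f p) x \<and> \<not> E (f q) x"
proof -
  let ?X = "\<lambda>r. {x \<in> V - f ` bubble_verts d. E (f r) x}"
  have "finite V"
    using assms(1) by (simp add: simple_graph_def)
  have count: "if r \<in> bubble_boundary d then 1 \<le> card (?X r) \<and> card (?X r) \<le> 2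
      else card (?X r) = 0" if "r \<in> bubble_verts d" for r
    using assms(2) that unfolding properly_attached_def Let_def by blast
  have "1 \<le> card (?X p)" "card (?X q) = 0"
    using count[OF assms(3)] count[OF assms(5)] assms(4,6) by simp_all
  moreover have "finite (?X q)"
    using \<open>finite V\<close> by simp
  ultimately obtain x where x: "x \<in> ?X p" and "?X q = {}"
    by (metis card.empty card_0_eq ex_in_conv not_one_le_zero)
  then have "\<not> E (f q) x"
    by blast
  moreover have "E x (f p)"
    using x assms(1) by (simp add: simple_graph_def)
  then have "x \<in> S"
    using x assms(2,3) by (auto simp: properly_attached_def attach_set_def)
  ultimately show ?thesis
    using x by auto
qed

lemma finite_attached_verts:
  assumes "simple_graph V E" "properly_attached V E d f S"
  shows "finite (f ` bubble_verts d \<union> S)"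
proof (rule finite_subset)
  show "f ` bubble_verts d \<union> S \<subseteq> V"
    using assms(2) unfolding properly_attached_def induced_bubble_def attach_set_def by blast
  show "finite V"
    using assms(1) by (simp add: simple_graph_def)
qed

lemma card_bubble_nbhd_sym_diff_less_host:
  assumes G: "simple_graph V E" and B: "properly_attached V E d f S"
    and "p \<in> bubble_verts d" "q \<in> bubble_verts d"
    and "(p \<in> bubble_boundary d) \<noteq> (q \<in> bubble_boundary d)"
  shows "card (nbhd_sym_diff (bubble_verts d) rook_adj p q)
    < card (nbhd_sym_diff (f ` bubble_verts d \<union> S) E (f p) (f q))"
proof -
  let ?W = "f ` bubble_verts d \<union> S"
  have less: "card (nbhd_sym_diff (bubble_verts d) rook_adj a b)
      < card (nbhd_sym_diff ?W E (f a) (f b))"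
    if ab: "a \<in> bubble_verts d" "a \<in> bubble_boundary d"
      "b \<in> bubble_verts d" "b \<notin> bubble_boundary d" for a b
  proof -
    have ind: "induced_bubble V E d f"
      using B by (simp add: properly_attached_def)
    obtain x where "x \<in> S" "E (f a) x" "\<not> E (f b) x"
      using properly_attached_private_nbr[OF G B ab] by blast
    moreover have "x \<notin> f ` bubble_verts d"
      using \<open>x \<in> S\<close> B by (simp add: properly_attached_def attach_set_def)
    ultimately have "x \<in> nbhd_sym_diff ?W E (f a) (f b) - f ` bubble_verts d"
      using ab by (auto simp: mem_nbhd_sym_diff)
    moreover have "f ` nbhd_sym_diff (bubble_verts d) rook_adj a b \<subseteq> nbhd_sym_diff ?W E (f a) (f b)"
      using ind ab by (intro image_nbhd_sym_diff_subset) (auto simp: induced_bubble_def)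
    moreover have "f ` nbhd_sym_diff (bubble_verts d) rook_adj a b \<subseteq> f ` bubble_verts d"
      by (auto simp: mem_nbhd_sym_diff)
    ultimately have "f ` nbhd_sym_diff (bubble_verts d) rook_adj a b \<subset> nbhd_sym_diff ?W E (f a) (f b)"
      by blast
    then have "card (f ` nbhd_sym_diff (bubble_verts d) rook_adj a b)
        < card (nbhd_sym_diff ?W E (f a) (f b))"
      by (intro psubset_card_mono finite_nbhd_sym_diff finite_attached_verts[OF G B])
    then show ?thesis
      using ind by (simp add: card_image_bubble_nbhd_sym_diff)
  qed
  show ?thesis
    using assms(3-5) less[of p q] less[of q p] nbhd_sym_diff_commute[of ?W E "f p"]
      nbhd_sym_diff_commute[of "bubble_verts d" rook_adj p]
    by (cases "p \<in> bubble_boundary d") simp_all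
qed

theorem mainTheorem10:
  fixes V :: "'a set" and E :: "'a \<Rightarrow> 'a \<Rightarrow> bool" and d :: nat
    and f :: "nat \<times> nat \<Rightarrow> 'a" and S :: "'a set"
  assumes "simple_graph V E"
    and "even d" and "d \<ge> 8"
    and "properly_attached V E d f S"
  shows "\<forall>u \<in> f ` bubble_verts d. \<forall>v \<in> f ` bubble_verts d.
           \<not> d_twins (f ` bubble_verts d \<union> S) E d u v"
proof (intro ballI notI)
  let ?W = "f ` bubble_verts d \<union> S"
  fix u v assume "u \<in> f ` bubble_verts d" "v \<in> f ` bubble_verts d" and twins: "d_twins ?W E d u v"
  then obtain p q where p: "p \<in> bubble_verts d" "u = f p" and q: "q \<in> bubble_verts d" "v = f q"
    by blast
  have "p \<noteq> q" and twin_card: "card (nbhd_sym_diff ?W E (f p) (f q)) \<le> d"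
    using twins p q by (auto simp: d_twins_iff_card_nbhd_sym_diff)
  have "card (nbhd_sym_diff (bubble_verts d) rook_adj p q) \<le> card (nbhd_sym_diff ?W E (f p) (f q))"
    using assms(4) p q finite_attached_verts[OF assms(1,4)]
    by (intro card_bubble_nbhd_sym_diff_le_host[where V = V]) (auto simp: properly_attached_def)
  moreover have "d = 2 * (d div 2)"
    using \<open>even d\<close> by simp
  ultimately show False
    using card_bubble_nbhd_sym_diff_lower[OF p(1) q(1) \<open>p \<noteq> q\<close> \<open>d \<ge> 8\<close>] twin_card
      card_bubble_nbhd_sym_diff_less_host[OF assms(1,4) p(1) q(1)]
    by linarith
qed

end
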